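(* For all non-negative integers $m$ and $n$, $$\sum_{k=1}^nH_k\sum_{j=m}^k\binom{k-1}{j-1}\frac{s(j,m)}{j!}=\frac{1}{m!}H_n(m)H_n-\frac{1}{m!}\sum_{k=1}^n\frac{H_{k-1}(m)}{k}.$$
   Context: For integers $m\ge 1$, $n\ge 0$, the multiple harmonic-like numbers are $H_n(m)=\sum_{1\le k_1+k_2+\cdots+k_m\le n}\frac{1}{k_1k_2\cdots k_m}$ (sum over positive integers $k_1,\dots,k_m$), with $H_n(0)=1$ for $n\ge 0$ and $H_0(m)=0$ for $m\ge1$. $H_n=H_n(1)=\sum_{k=1}^n\frac1k$. The (signed) Stirling numbers of the first kind $s(n,k)$ are defined by $\sum_{n\ge k}s(n,k)\frac{z^n}{n!}=\frac{\ln^k(1+z)}{k!}$, with $s(n,k)=0$ for $n<k$. Binomial coefficients with negative lower index are $0$. *)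

theory Defs
  imports "HOL-Analysis.Harmonic_Numbers" "HOL-Combinatorics.Stirling"
begin

definition stirling1s :: "nat \<Rightarrow> nat \<Rightarrow> real" where
  "stirling1s n k = (-1) ^ (n - k) * real (stirling n k)"

text \<open>Multiple harmonic-like numbers H_n(m): sum over tuples (k_1,...,k_m) of positive
  integers with k_1+...+k_m \<le> n of 1/(k_1...k_m).  For m = 0 the only tuple is empty, giving 1.\<close>
definition mhn :: "nat \<Rightarrow> nat \<Rightarrow> real" where
  "mhn n m = (\<Sum>ks\<in>{ks :: nat list. length ks = m \<and> (\<forall>k\<in>set ks. 1 \<le> k) \<and> sum_list ks \<le> n}.
                 1 / real (prod_list ks))"

text \<open>Binomial coefficient binom(a, b-1) with integer lower index b-1; zero when b = 0.\<close>
definition binom_pred :: "nat \<Rightarrow> nat \<Rightarrow> real" where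
  "binom_pred a b = (if b = 0 then 0 else real (a choose (b - 1)))"

end

theory Submission
  imports Defs "HOL-Computational_Algebra.Formal_Power_Series"
begin

text \<open>As a power series in \<open>n\<close>, \<open>H\<^sub>n(m)\<close> is \<open>(-ln (1 - x)) ^ m / (1 - x)\<close>, so for \<open>k \<ge> 1\<close> the
  difference \<open>H\<^sub>k(m) - H\<^sub>k\<^sub>-\<^sub>1(m)\<close> is the coefficient of \<open>x ^ k\<close> in \<open>(-ln (1 - x)) ^ m\<close>. Substituting
  \<open>z = x / (1 - x)\<close> into \<open>ln (1 + z) ^ m / m! = \<Sum>\<^sub>j s(j, m) z ^ j / j!\<close> and expanding
  \<open>(x / (1 - x)) ^ j = \<Sum>\<^sub>k binom(k - 1, j - 1) x ^ k\<close> identifies the inner sum with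
  \<open>(H\<^sub>k(m) - H\<^sub>k\<^sub>-\<^sub>1(m)) / m!\<close>. Instead of composing series, both sides are shown to satisfy the
  differential recurrence \<open>(1 - x) F (m + 1)' = F m\<close>. Summation by parts against \<open>H\<^sub>k\<close> then
  gives the identity.\<close>

unbundle fps_syntax

definition harm_tuples :: "nat \<Rightarrow> nat \<Rightarrow> nat list set" where
  "harm_tuples n m = {ks. length ks = m \<and> (\<forall>k\<in>set ks. 1 \<le> k) \<and> sum_list ks \<le> n}"

lemma mhn_eq_sum_harm_tuples: "mhn n m = (\<Sum>ks\<in>harm_tuples n m. 1 / real (prod_list ks))"
  unfolding mhn_def harm_tuples_def ..

lemma finite_harm_tuples: "finite (harm_tuples n m)"
proof (rule finite_subset)
  show "harm_tuples n m \<subseteq> {ks. set ks \<subseteq> {0..n} \<and> length ks = m}"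
    unfolding harm_tuples_def using member_le_sum_list by fastforce
qed (rule finite_lists_length_eq, simp)

lemma harm_tuples_0: "harm_tuples n 0 = {[]}"
  unfolding harm_tuples_def by auto

lemma harm_tuples_Suc:
  "harm_tuples n (Suc m) = (\<lambda>(i, ks). i # ks) ` (SIGMA i:{1..n}. harm_tuples (n - i) m)"
proof (intro equalityI subsetI)
  fix xs assume "xs \<in> harm_tuples n (Suc m)"
  then obtain i ks where "xs = i # ks" "length ks = m" "1 \<le> i" "\<forall>k\<in>set ks. 1 \<le> k"
    "i + sum_list ks \<le> n"
    unfolding harm_tuples_def by (cases xs) auto
  then show "xs \<in> (\<lambda>(i, ks). i # ks) ` (SIGMA i:{1..n}. harm_tuples (n - i) m)"
    unfolding harm_tuples_def by (auto intro!: image_eqI[where x = "(i, ks)"])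
qed (auto simp: harm_tuples_def)

lemma mhn_0_right: "mhn n 0 = 1"
  by (simp add: mhn_eq_sum_harm_tuples harm_tuples_0)

lemma mhn_Suc_right: "mhn n (Suc m) = (\<Sum>i=1..n. mhn (n - i) m / real i)"
proof -
  have "inj_on (\<lambda>(i, ks). i # ks) (SIGMA i:{1..n}. harm_tuples (n - i) m)"
    by (auto simp: inj_on_def)
  then have "mhn n (Suc m)
      = (\<Sum>(i, ks)\<in>(SIGMA i:{1..n}. harm_tuples (n - i) m). 1 / real (prod_list (i # ks)))"
    by (simp add: mhn_eq_sum_harm_tuples harm_tuples_Suc sum.reindex split_def)
  also have "\<dots> = (\<Sum>i=1..n. \<Sum>ks\<in>harm_tuples (n - i) m. 1 / real (prod_list (i # ks)))"
    by (rule sum.Sigma[symmetric]) (auto simp: finite_harm_tuples)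
  also have "\<dots> = (\<Sum>i=1..n. mhn (n - i) m / real i)"
    by (simp add: mhn_eq_sum_harm_tuples sum_divide_distrib mult.commute)
  finally show ?thesis .
qed

definition ones_fps :: "'a::semiring_1 fps" where
  "ones_fps = Abs_fps (\<lambda>_. 1)"

text \<open>The power series of \<open>-ln (1 - x)\<close>; its constant coefficient is \<open>1 / 0 = 0\<close>.\<close>
definition neg_ln_1m_fps :: "'a::field_char_0 fps" where
  "neg_ln_1m_fps = Abs_fps (\<lambda>i. 1 / of_nat i)"

lemma fps_mult_ones_nth: "(F * ones_fps) $ n = (\<Sum>i\<le>n. F $ i)"
  by (simp add: fps_mult_nth ones_fps_def atLeast0AtMost)

lemma fps_one_minus_fps_X_mult_nth:
  "((1 - fps_X) * (A :: 'a::ring_1 fps)) $ n = A $ n - (if n = 0 then 0 else A $ (n - 1))"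
  by (simp add: algebra_simps)

lemma one_minus_fps_X_mult_ones: "(1 - fps_X) * ones_fps = (1 :: 'a::ring_1 fps)"
proof (rule fps_ext)
  fix n show "((1 - fps_X) * ones_fps) $ n = (1 :: 'a fps) $ n"
    by (simp add: fps_one_minus_fps_X_mult_nth ones_fps_def del: fps_mult_nth_0)
qed

lemma fps_deriv_neg_ln_1m: "fps_deriv neg_ln_1m_fps = (ones_fps :: 'a::field_char_0 fps)"
  by (simp add: fps_eq_iff neg_ln_1m_fps_def ones_fps_def del: of_nat_Suc)

lemma mhn_eq_fps_nth: "mhn n m = (neg_ln_1m_fps ^ m * ones_fps) $ n"
proof (induction m arbitrary: n)
  case 0
  then show ?case by (simp add: mhn_0_right ones_fps_def)
next
  case (Suc m)
  have "(neg_ln_1m_fps ^ Suc m * ones_fps) $ n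
      = (\<Sum>i=0..n. neg_ln_1m_fps $ i * (neg_ln_1m_fps ^ m * ones_fps) $ (n - i))"
    by (simp add: fps_mult_nth mult.assoc)
  also have "\<dots> = (\<Sum>i=1..n. mhn (n - i) m / real i)"
    by (simp add: sum.atLeast_Suc_atMost neg_ln_1m_fps_def Suc)
  finally show ?case by (simp add: mhn_Suc_right)
qed

lemma neg_ln_1m_power_nth_Suc:
  "(neg_ln_1m_fps ^ m) $ Suc k = mhn (Suc k) m - mhn k m"
  unfolding mhn_eq_fps_nth fps_mult_ones_nth by simp

lemma one_minus_fps_X_deriv_neg_ln_1m_power:
  "(1 - fps_X) * fps_deriv (fps_const (1 / fact (Suc m)) * neg_ln_1m_fps ^ Suc m)
    = fps_const (1 / fact m) * (neg_ln_1m_fps ^ m :: 'a::field_char_0 fps)"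
proof -
  have "(1 - fps_X) * fps_deriv (fps_const (1 / fact (Suc m)) * neg_ln_1m_fps ^ Suc m)
      = fps_const (1 / fact (Suc m)) * fps_const (of_nat (Suc m)) * ((1 - fps_X) * ones_fps)
        * (neg_ln_1m_fps ^ m :: 'a fps)"
    by (simp add: fps_deriv_power fps_deriv_neg_ln_1m ac_simps del: power_Suc of_nat_Suc fact_Suc)
  also have "fps_const (1 / fact (Suc m)) * fps_const (of_nat (Suc m)) = (fps_const (1 / fact m) :: 'a fps)"
    by (simp add: field_simps del: of_nat_Suc)
  finally show ?thesis
    by (simp add: one_minus_fps_X_mult_ones)
qed

lemma fps_eq_if_one_minus_fps_X_deriv_eq:
  fixes A B :: "'a::{idom, semiring_char_0} fps"
  assumes "(1 - fps_X) * fps_deriv A = (1 - fps_X) * fps_deriv B" and "A $ 0 = B $ 0"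
  shows "A = B"
proof -
  have "(1 - fps_X :: 'a fps) \<noteq> 0"
    by (metis fps_X_neq_one right_minus_eq)
  then have "fps_deriv A = fps_deriv B"
    using assms(1) by simp
  then show ?thesis
    using assms(2) by (simp add: fps_deriv_eq_iff)
qed

lemma stirling1s_Suc_Suc:
  "stirling1s (Suc j) (Suc m) = stirling1s j m - real j * stirling1s j (Suc m)"
proof (cases "j \<le> m")
  case True
  then show ?thesis by (cases "j = m") (simp_all add: stirling1s_def)
next
  case False
  then have "j - m = Suc (j - Suc m)" by simp
  then show ?thesis by (simp add: stirling1s_def algebra_simps)
qed

text \<open>\<open>s(j, m) / j!\<close> is the coefficient of \<open>z ^ j\<close> in \<open>ln (1 + z) ^ m / m!\<close>; the recurrence
  below is the coefficientwise form of \<open>(1 + z) d/dz (ln (1 + z) ^ (m + 1) / (m + 1)!) = ln (1 + z) ^ m / m!\<close>.\<close>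
definition stirling1s_div_fact :: "nat \<Rightarrow> nat \<Rightarrow> real" where
  "stirling1s_div_fact j m = stirling1s j m / fact j"

lemma stirling1s_div_fact_rec:
  "real (Suc j) * stirling1s_div_fact (Suc j) (Suc m) + real j * stirling1s_div_fact j (Suc m)
    = stirling1s_div_fact j m"
  by (simp add: stirling1s_div_fact_def stirling1s_Suc_Suc field_simps del: of_nat_Suc)

lemma of_nat_binomial_absorb_comp:
  "real (Suc n) * real (n choose i) = (real (Suc n) - real i) * real (Suc n choose i)"
proof (cases "i \<le> Suc n")
  case True
  have "real ((Suc n - i) * (Suc n choose i)) = real (Suc n * (n choose i))"
    using binomial_absorb_comp[of "Suc n" i] by simp
  then show ?thesis
    using True by (simp only: of_nat_mult of_nat_diff)
qed (simp add: binomial_eq_0)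

text \<open>The coefficient of \<open>x ^ k\<close> in \<open>(x / (1 - x)) ^ j\<close>.\<close>
definition shifted_binom :: "nat \<Rightarrow> nat \<Rightarrow> real" where
  "shifted_binom k j = (if k = 0 then (if j = 0 then 1 else 0) else binom_pred (k - 1) j)"

lemma shifted_binom_eq_0: "k < j \<Longrightarrow> shifted_binom k j = 0"
  by (simp add: shifted_binom_def binom_pred_def binomial_eq_0)

lemma shifted_binom_Suc_Suc:
  "shifted_binom (Suc k) (Suc j) = shifted_binom k j + shifted_binom k (Suc j)"
  by (cases k; cases j) (simp_all add: shifted_binom_def binom_pred_def)

lemma shifted_binom_absorb:
  "real (Suc k) * shifted_binom (Suc k) j - real k * shifted_binom k j
    = real j * shifted_binom (Suc k) j"
proof (cases k)
  case (Suc k')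
  then show ?thesis
    using of_nat_binomial_absorb_comp[of k' "j - 1"]
    by (cases j) (simp_all add: shifted_binom_def binom_pred_def algebra_simps)
qed (auto simp: shifted_binom_def binom_pred_def)

definition stirling_binom_sum :: "nat \<Rightarrow> nat \<Rightarrow> real" where
  "stirling_binom_sum k m = (\<Sum>j\<le>k. shifted_binom k j * stirling1s_div_fact j m)"

lemma stirling_binom_sum_Suc_upper:
  "stirling_binom_sum k m = (\<Sum>j\<le>Suc k. shifted_binom k j * stirling1s_div_fact j m)"
  by (simp add: stirling_binom_sum_def shifted_binom_eq_0)

lemma stirling_binom_sum_rec:
  "real (Suc n) * stirling_binom_sum (Suc n) (Suc m) - real n * stirling_binom_sum n (Suc m)
    = stirling_binom_sum n m"
proof -
  define c where "c = shifted_binom"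
  define D where "D j = real j * stirling1s_div_fact j (Suc m)" for j
  have "stirling_binom_sum n m = (\<Sum>j\<le>n. c n j * (D (Suc j) + D j))"
    by (simp only: stirling_binom_sum_def c_def D_def stirling1s_div_fact_rec)
  also have "\<dots> = (\<Sum>j\<le>n. c n j * D (Suc j)) + (\<Sum>j\<le>Suc n. c n j * D j)"
    by (simp add: distrib_left sum.distrib c_def shifted_binom_eq_0)
  also have "(\<Sum>j\<le>Suc n. c n j * D j) = (\<Sum>j\<le>n. c n (Suc j) * D (Suc j))"
    by (subst sum.atMost_Suc_shift) (simp add: D_def)
  also have "(\<Sum>j\<le>n. c n j * D (Suc j)) + \<dots> = (\<Sum>j\<le>n. c (Suc n) (Suc j) * D (Suc j))"
    by (simp add: c_def shifted_binom_Suc_Suc sum.distrib algebra_simps)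
  also have "\<dots> = (\<Sum>j\<le>Suc n. c (Suc n) j * D j)"
    by (subst sum.atMost_Suc_shift) (simp add: D_def)
  also have "\<dots> = (\<Sum>j\<le>Suc n. (real (Suc n) * c (Suc n) j - real n * c n j)
                                     * stirling1s_div_fact j (Suc m))"
    unfolding c_def D_def shifted_binom_absorb by (simp add: ac_simps)
  also have "\<dots> = real (Suc n) * stirling_binom_sum (Suc n) (Suc m) - real n * stirling_binom_sum n (Suc m)"
    unfolding stirling_binom_sum_Suc_upper[of n]
    by (simp add: stirling_binom_sum_def c_def sum_distrib_left sum_subtractf algebra_simps
        del: of_nat_Suc)
  finally show ?thesis ..
qed

lemma stirling_binom_sum_0_right: "stirling_binom_sum k 0 = (if k = 0 then 1 else 0)"
  by (cases k) (auto simp: stirling_binom_sum_def stirling1s_div_fact_def stirling1s_def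
      shifted_binom_def binom_pred_def intro!: sum.neutral)

lemma stirling_binom_sum_0_Suc: "stirling_binom_sum 0 (Suc m) = 0"
  by (simp add: stirling_binom_sum_def stirling1s_div_fact_def stirling1s_def)

definition stirling_binom_fps :: "nat \<Rightarrow> real fps" where
  "stirling_binom_fps m = Abs_fps (\<lambda>k. stirling_binom_sum k m)"

lemma one_minus_fps_X_deriv_stirling_binom_fps:
  "(1 - fps_X) * fps_deriv (stirling_binom_fps (Suc m)) = stirling_binom_fps m"
proof (rule fps_ext)
  fix n show "((1 - fps_X) * fps_deriv (stirling_binom_fps (Suc m))) $ n = stirling_binom_fps m $ n"
    using stirling_binom_sum_rec[of n m]
    by (cases n) (simp_all add: stirling_binom_fps_def fps_one_minus_fps_X_mult_nth
                   del: fps_mult_nth_0 of_nat_Suc)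
qed

text \<open>Both sides solve \<open>(1 - x) F (m + 1)' = F m\<close> and have vanishing constant term.\<close>
lemma stirling_binom_fps_eq: "stirling_binom_fps m = fps_const (1 / fact m) * neg_ln_1m_fps ^ m"
proof (induction m)
  case 0
  show ?case
    by (simp add: fps_eq_iff stirling_binom_fps_def stirling_binom_sum_0_right)
next
  case (Suc m)
  show ?case
  proof (rule fps_eq_if_one_minus_fps_X_deriv_eq)
    show "(1 - fps_X) * fps_deriv (stirling_binom_fps (Suc m))
        = (1 - fps_X) * fps_deriv (fps_const (1 / fact (Suc m)) * neg_ln_1m_fps ^ Suc m)"
      by (simp only: one_minus_fps_X_deriv_stirling_binom_fps
          one_minus_fps_X_deriv_neg_ln_1m_power Suc.IH)
    show "stirling_binom_fps (Suc m) $ 0 = (fps_const (1 / fact (Suc m)) * neg_ln_1m_fps ^ Suc m) $ 0"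
      by (simp add: stirling_binom_fps_def stirling_binom_sum_0_Suc fps_nth_power_0
          neg_ln_1m_fps_def del: power_Suc)
  qed
qed

lemma stirling_binom_sum_eq_mhn_diff:
  "stirling_binom_sum (Suc k) m = (mhn (Suc k) m - mhn k m) / fact m"
proof -
  have "stirling_binom_sum (Suc k) m = stirling_binom_fps m $ Suc k"
    by (simp add: stirling_binom_fps_def)
  then show ?thesis
    by (simp add: stirling_binom_fps_eq neg_ln_1m_power_nth_Suc)
qed

lemma inner_sum_eq_mhn_diff:
  assumes "1 \<le> k"
  shows "(\<Sum>j=m..k. binom_pred (k - 1) j * stirling1s j m / fact j)
    = (mhn k m - mhn (k - 1) m) / fact m"
proof -
  obtain k' where k: "k = Suc k'"
    using assms by (cases k) auto
  have "(\<Sum>j=m..k. binom_pred (k - 1) j * stirling1s j m / fact j)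
      = (\<Sum>j\<le>k. binom_pred (k - 1) j * stirling1s j m / fact j)"
    by (rule sum.mono_neutral_left) (auto simp: stirling1s_def)
  also have "\<dots> = stirling_binom_sum k m"
    by (simp add: stirling_binom_sum_def stirling1s_div_fact_def shifted_binom_def k)
  finally show ?thesis
    by (simp add: stirling_binom_sum_eq_mhn_diff k)
qed

lemma sum_harm_mult_diff:
  fixes M :: "nat \<Rightarrow> real"
  shows "(\<Sum>k=1..n. harm k * (M k - M (k - 1))) = M n * harm n - (\<Sum>k=1..n. M (k - 1) / real k)"
  by (induction n) (simp_all add: harm_def harm_Suc algebra_simps divide_inverse)

theorem theorem6:
  fixes m n :: nat
  shows "(\<Sum>k=1..n. (harm k :: real) * (\<Sum>j=m..k. binom_pred (k - 1) j * stirling1s j m / fact j))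
       = mhn n m * (harm n :: real) / fact m - (\<Sum>k=1..n. mhn (k - 1) m / real k) / fact m"
proof -
  have "(\<Sum>k=1..n. (harm k :: real) * (\<Sum>j=m..k. binom_pred (k - 1) j * stirling1s j m / fact j))
      = (\<Sum>k=1..n. harm k * (mhn k m - mhn (k - 1) m)) / fact m"
    unfolding sum_divide_distrib
    by (intro sum.cong refl) (simp add: inner_sum_eq_mhn_diff del: One_nat_def)
  also have "\<dots> = mhn n m * harm n / fact m - (\<Sum>k=1..n. mhn (k - 1) m / real k) / fact m"
    unfolding sum_harm_mult_diff[of "\<lambda>k. mhn k m"] by (simp add: diff_divide_distrib)
  finally show ?thesis .
qed

end
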